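(* Let $n\ge 5$ be odd, $k=\frac{n-3}{2}$, $G=(V,E)=K_n$, and let $C=(v_1,\dots,v_{2k+1})$ be a cycle of length $n-2$ in $G$, with $s,t$ the two vertices of $G$ not on $C$. Then the $C$-induced constraint \[ x_{\{s,t\}}+k\cdot x(\delta(V(C)))+\sum_{e\in E[V\setminus\{s,t\}]}\ell(e)\,x_e\ \ge\ 2k+1 \] is valid for $P^{\uparrow}_{\mathrm{odd}}(G)$ and defines a facet of it.
   Context: $K_n$ is the complete graph on $n$ vertices. For a graph $G=(V,E)$, $P_{\mathrm{odd}}(G)=\operatorname{conv}\{\chi^D\colon D \text{ an odd cycle of } G\}$ and $P^{\uparrow}_{\mathrm{odd}}(G)=P_{\mathrm{odd}}(G)+\mathbb{R}^E_{\ge0}$. $\delta(V(C))$ is the set of edges with exactly one endpoint on $C$, $E[S]$ the set of edges with both endpoints in $S$, and $x(S)=\sum_{e\in S}x_e$. For $i\ne j$, $\ell(\{v_i,v_j\})=|j-i|$ if $|j-i|$ is odd and $\ell(\{v_i,v_j\})=2k+1-|j-i|$ otherwise (the length of the odd-length path on $C$ between $v_i$ and $v_j$). *)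

theory Defs
  imports "HOL-Analysis.Analysis"
begin

text \<open>We use the coordinate space real^('v set); only the coordinates indexed by 2-element
  sets (the edges of K_n) are ever nonzero in the polyhedra below, so affine dimensions
  and faces coincide with those in R^E.\<close>

definition Kn_edges :: "'v::finite set set" where
  "Kn_edges = {e. card e = 2}"

definition odd_cycles :: "'v::finite set set set" where
  "odd_cycles = { {{u i, u ((i + 1) mod m)} | i. i < m} | u m.
                   3 \<le> (m::nat) \<and> odd m \<and> inj_on u {..<m} }"

definition chi :: "'v::finite set set \<Rightarrow> real ^ ('v set)" where
  "chi D = (\<chi> e. if e \<in> D then 1 else 0)"

definition P_odd :: "(real ^ ('v::finite set)) set" where
  "P_odd = convex hull (chi ` odd_cycles)"

definition nonneg_edge_cone :: "(real ^ ('v::finite set)) set" where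
  "nonneg_edge_cone = {y. \<forall>e. 0 \<le> y $ e \<and> (e \<notin> (Kn_edges :: 'v set set) \<longrightarrow> y $ e = 0)}"

definition P_odd_up :: "(real ^ ('v::finite set)) set" where
  "P_odd_up = {a + b | a b. a \<in> P_odd \<and> b \<in> nonneg_edge_cone}"

text \<open>Length of the odd-length path on the cycle C = (v_1,...,v_(2k+1)) between v_i and v_j.\<close>
definition ell :: "nat \<Rightarrow> nat \<Rightarrow> nat \<Rightarrow> nat" where
  "ell k i j = (let d = (if i \<le> j then j - i else i - j) in
                 if odd d then d else 2 * k + 1 - d)"

definition C_lhs :: "nat \<Rightarrow> (nat \<Rightarrow> 'v::finite) \<Rightarrow> 'v \<Rightarrow> 'v \<Rightarrow> real ^ ('v set) \<Rightarrow> real" where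
  "C_lhs k v s t x =
     x $ {s, t}
     + real k * (\<Sum>e\<in>{e \<in> Kn_edges. card (e \<inter> v ` {1..2*k+1}) = 1}. x $ e)
     + (\<Sum>(i, j)\<in>{(i, j). 1 \<le> i \<and> i < j \<and> j \<le> 2*k+1}. real (ell k i j) * x $ {v i, v j})"

end

theory Submission
  imports Defs
begin

(*
  Write the constraint as w . x >= 2k+1, where w is 1 on {s,t}, k on the spokes from s and t
  to C, and ell on the chords of C.

  Validity: an odd cycle through s or t leaves {s,t} and re-enters it along two spokes of
  weight k and has a further edge of weight at least 1. An odd cycle inside C visits
  v_(p_0), v_(p_1), ...; each chord length ell(p_i, p_(i+1)) is odd and, with a suitable sign,
  congruent to p_(i+1) - p_i modulo 2k+1. The signed lengths therefore add up to an odd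
  multiple of 2k+1, so the weight of the cycle is at least 2k+1.

  Facet: the face is proper and P_odd_up lives in R^E. If some vector c of R^E has constant
  inner product with the characteristic vectors of all tight odd cycles, then c is a multiple
  of w: the triangles s t v_i, s v_i v_(i+1) and t v_i v_(i+1), chords closed by an arc of C,
  and triangles made of a chord, an edge of C and another chord force, step by step, the
  values of c on all edges. Hence the tight cycles span an affine space of codimension one.
*)

section \<open>Closed walks on a cycle\<close>

lemma sum_cyclic_differences:
  fixes p :: "nat \<Rightarrow> 'a::ab_group_add"
  shows "(\<Sum>i<m. p (Suc i mod m) - p i) = 0"
proof (cases m)
  case (Suc n)
  have "(\<Sum>i<m. p (Suc i mod m)) = (\<Sum>i<n. p (Suc i)) + p 0"
    by (simp add: Suc)
  also have "\<dots> = (\<Sum>i<m. p i)"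
    unfolding Suc sum.lessThan_Suc_shift by (simp add: add.commute)
  finally show ?thesis by (simp add: sum_subtractf)
qed simp

lemma abs_modulus_le_odd_closed_walk:
  fixes g p :: "nat \<Rightarrow> int" and N :: int
  assumes "odd m"
    and odd_step: "\<And>i. i < m \<Longrightarrow> odd (g i)"
    and step_mod: "\<And>i. i < m \<Longrightarrow> N dvd g i - (p (Suc i mod m) - p i)"
  shows "\<bar>N\<bar> \<le> (\<Sum>i<m. \<bar>g i\<bar>)"
proof -
  have "N dvd (\<Sum>i<m. g i - (p (Suc i mod m) - p i))"
    using step_mod by (intro dvd_sum) simp
  then have "N dvd (\<Sum>i<m. (g i - (p (Suc i mod m) - p i)) + (p (Suc i mod m) - p i))"
    unfolding sum.distrib sum_cyclic_differences by simp
  then have "N dvd (\<Sum>i<m. g i)"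
    by simp
  moreover have "{i \<in> {..<m}. odd (g i)} = {..<m}"
    using odd_step by auto
  then have "odd (\<Sum>i<m. g i)"
    using \<open>odd m\<close> by (simp add: even_sum_iff)
  ultimately have "\<bar>N\<bar> \<le> \<bar>\<Sum>i<m. g i\<bar>"
    by (intro dvd_imp_le_int) auto
  also have "\<dots> \<le> (\<Sum>i<m. \<bar>g i\<bar>)"
    by (rule sum_abs)
  finally show ?thesis .
qed

lemma cyclic_transition:
  assumes "i < m" "P i" "j < m" "\<not> P j"
  obtains l where "l < m" "P l" "\<not> P (Suc l mod m)"
proof -
  have reach: "P ((i + d) mod m)" if no_exit: "\<forall>l<m. P l \<longrightarrow> P (Suc l mod m)" for d
  proof (induction d)
    case (Suc d)
    then have "P (Suc ((i + d) mod m) mod m)"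
      using no_exit \<open>i < m\<close> by simp
    then show ?case
      by (simp add: mod_Suc_eq)
  qed (use assms in simp)
  have "(i + (j + m - i)) mod m = j"
    using assms(1,3) by simp
  then show thesis
    using reach[of "j + m - i"] assms(4) that by auto
qed

lemma alternating_vanishes_on_odd_cycle:
  fixes f :: "nat \<Rightarrow> 'a::field_char_0"
  assumes "odd n"
    and step: "\<And>j. 1 \<le> j \<Longrightarrow> j < n \<Longrightarrow> f j + f (Suc j) = 0"
    and close: "f n + f 1 = 0"
    and "1 \<le> i" "i \<le> n"
  shows "f i = 0"
proof -
  have alt: "f (Suc j) = (-1) ^ j * f 1" if "j < n" for j
    using that
  proof (induction j)
    case (Suc j)
    then have "f (Suc (Suc j)) = - f (Suc j)"
      using step[of "Suc j"] by (simp add: add_eq_0_iff)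
    then show ?case
      using Suc by simp
  qed simp
  have "f n = f 1"
    using alt[of "n - 1"] \<open>odd n\<close> \<open>1 \<le> i\<close> \<open>i \<le> n\<close> by simp
  then have "f 1 = 0"
    using close by simp
  then show ?thesis
    using alt[of "i - 1"] assms(4,5) by simp
qed

section \<open>A facet criterion\<close>

lemma dim_le_Suc_of_orthogonal_multiples:
  fixes L R :: "'a::euclidean_space set"
  assumes "subspace L" "R \<subseteq> L" "a \<in> L"
    and multiples: "\<And>c. c \<in> L \<Longrightarrow> (\<And>y. y \<in> R \<Longrightarrow> c \<bullet> y = 0) \<Longrightarrow> \<exists>r. c = r *\<^sub>R a"
  shows "dim L \<le> dim R + 1"
proof (rule ccontr)
  assume "\<not> dim L \<le> dim R + 1"
  then have "dim (insert a R) < dim L"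
    by (simp add: dim_insert)
  moreover have "span (insert a R) \<subseteq> span L"
    using assms(2,3) by (intro span_mono) auto
  ultimately have "span (insert a R) \<subset> span L"
    by (metis dim_span order_less_irrefl psubsetI)
  then obtain c where "c \<noteq> 0" "c \<in> span L" and orth: "\<And>y. y \<in> span (insert a R) \<Longrightarrow> orthogonal c y"
    by (rule orthogonal_to_subspace_exists_gen) blast
  have "c \<in> L"
    using \<open>c \<in> span L\<close> \<open>subspace L\<close> by (metis span_eq_iff)
  moreover have "c \<bullet> y = 0" if "y \<in> R" for y
    using orth[of y] that by (simp add: orthogonal_def span_base)
  ultimately obtain r where "c = r *\<^sub>R a"
    using multiples by blast
  moreover have "c \<bullet> a = 0"
    using orth[of a] by (simp add: orthogonal_def span_base)
  ultimately have "c \<bullet> c = 0"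
    by simp
  with \<open>c \<noteq> 0\<close> show False
    by simp
qed

lemma facet_of_halfspace_rigid:
  fixes P L T :: "'a::euclidean_space set"
  assumes "convex P" "subspace L" "P \<subseteq> L" "a \<in> L"
    and valid: "\<And>x. x \<in> P \<Longrightarrow> b \<le> a \<bullet> x"
    and "T \<subseteq> P" "x0 \<in> T" and tight: "\<And>x. x \<in> T \<Longrightarrow> a \<bullet> x = b"
    and "p \<in> P" "a \<bullet> p \<noteq> b"
    and rigid: "\<And>c \<beta>. c \<in> L \<Longrightarrow> (\<And>x. x \<in> T \<Longrightarrow> c \<bullet> x = \<beta>) \<Longrightarrow> \<exists>r. c = r *\<^sub>R a"
  shows "{x \<in> P. a \<bullet> x = b} facet_of P"
proof -
  define F where "F = {x \<in> P. a \<bullet> x = b}"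
  define R where "R = (+) (- x0) ` T"
  have face: "F face_of P"
    using face_of_Int_supporting_hyperplane_ge[OF \<open>convex P\<close> valid] by (simp add: F_def Int_def)
  have "T \<subseteq> F"
    using \<open>T \<subseteq> P\<close> tight by (auto simp: F_def)
  have "F \<noteq> P"
    using \<open>p \<in> P\<close> \<open>a \<bullet> p \<noteq> b\<close> by (auto simp: F_def)
  then have "aff_dim F < aff_dim P"
    by (rule face_of_aff_dim_lt[OF \<open>convex P\<close> face])
  moreover have "aff_dim P \<le> int (dim L)"
    using aff_dim_subset[OF \<open>P \<subseteq> L\<close>] aff_dim_subspace[OF \<open>subspace L\<close>] by simp
  moreover have "int (dim R) \<le> aff_dim F"
    using aff_dim_eq_dim[OF hull_inc[OF \<open>x0 \<in> T\<close>]] aff_dim_subset[OF \<open>T \<subseteq> F\<close>]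
    by (simp add: R_def)
  moreover have "dim L \<le> dim R + 1"
  proof (rule dim_le_Suc_of_orthogonal_multiples[OF \<open>subspace L\<close> _ \<open>a \<in> L\<close>])
    show "R \<subseteq> L"
      using \<open>T \<subseteq> P\<close> \<open>P \<subseteq> L\<close> \<open>x0 \<in> T\<close> \<open>subspace L\<close>
      by (auto simp: R_def intro: subspace_diff)
    fix c
    assume "c \<in> L" and orth: "\<And>y. y \<in> R \<Longrightarrow> c \<bullet> y = 0"
    have "c \<bullet> x = c \<bullet> x0" if "x \<in> T" for x
    proof -
      have "- x0 + x \<in> R"
        unfolding R_def using that by (rule imageI)
      then have "c \<bullet> (- x0 + x) = 0"
        by (rule orth)
      then show ?thesis
        by (simp add: inner_diff_right)
    qed
    then show "\<exists>r. c = r *\<^sub>R a"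
      using rigid[OF \<open>c \<in> L\<close>] by blast
  qed
  ultimately have "aff_dim F = aff_dim P - 1"
    by linarith
  moreover have "F \<noteq> {}"
    using \<open>T \<subseteq> F\<close> \<open>x0 \<in> T\<close> by blast
  ultimately show ?thesis
    using face unfolding F_def facet_of_def by blast
qed

section \<open>Odd cycles of the complete graph\<close>

definition cycle_edges :: "(nat \<Rightarrow> 'a) \<Rightarrow> nat \<Rightarrow> 'a set set" where
  "cycle_edges u m = (\<lambda>i. {u i, u (Suc i mod m)}) ` {..<m}"

lemma odd_cycles_eq:
  "odd_cycles = {cycle_edges u m | u m. 3 \<le> m \<and> odd m \<and> inj_on u {..<m}}"
proof -
  have edges: "{{u i, u ((i + 1) mod m)} | i. i < m} = cycle_edges u m" for u and m :: nat
    by (auto simp: cycle_edges_def)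
  show ?thesis
    by (simp only: odd_cycles_def edges)
qed

lemma inj_on_cycle_edge:
  assumes "3 \<le> m" "inj_on u {..<m}"
  shows "inj_on (\<lambda>i. {u i, u (Suc i mod m)}) {..<m}"
proof (rule inj_onI)
  fix i j
  assume ij: "i \<in> {..<m}" "j \<in> {..<m}" and eq: "{u i, u (Suc i mod m)} = {u j, u (Suc j mod m)}"
  have "Suc i mod m \<in> {..<m}" "Suc j mod m \<in> {..<m}"
    using assms by auto
  moreover have "u i = u j \<or> (u i = u (Suc j mod m) \<and> u (Suc i mod m) = u j)"
    using eq by (auto simp: doubleton_eq_iff)
  ultimately have "i = j \<or> (i = Suc j mod m \<and> Suc i mod m = j)"
    using ij by (simp add: inj_on_eq_iff[OF assms(2)])
  moreover have "Suc (Suc i mod m) mod m = (i + 2) mod m"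
    by (simp add: mod_Suc_eq)
  moreover have "(i + 2) mod m \<noteq> i"
    using assms(1) ij by (cases "i + 2 < m") (auto simp: mod_if)
  ultimately show "i = j"
    by auto
qed

lemma sum_cycle_edges:
  assumes "3 \<le> m" "inj_on u {..<m}"
  shows "(\<Sum>e\<in>cycle_edges u m. f e) = (\<Sum>i<m. f {u i, u (Suc i mod m)})"
  unfolding cycle_edges_def using inj_on_cycle_edge[OF assms] by (simp add: sum.reindex)

lemma cycle_step_neq:
  assumes "2 \<le> m" "inj_on u {..<m}" "i < m"
  shows "u i \<noteq> u (Suc i mod m)"
proof -
  have "Suc i mod m \<noteq> i"
    using assms(1,3) by (cases "Suc i < m") (auto simp: mod_if)
  then show ?thesis
    using assms(1,3) by (simp add: inj_on_eq_iff[OF assms(2)])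
qed

lemma cycle_edges_subset_Kn_edges:
  assumes "2 \<le> m" "inj_on u {..<m}"
  shows "cycle_edges u m \<subseteq> Kn_edges"
  using cycle_step_neq[OF assms] by (auto simp: cycle_edges_def Kn_edges_def)

lemma triangle_in_odd_cycles:
  assumes "a \<noteq> b" "b \<noteq> c" "a \<noteq> c"
  shows "{{a, b}, {b, c}, {a, c}} \<in> odd_cycles"
proof -
  define u where "u i = (if i = 0 then a else if i = 1 then b else c)" for i :: nat
  have three: "{..<3::nat} = {0, 1, 2}"
    by auto
  have "inj_on u {..<3}"
    using assms by (simp add: three u_def)
  moreover have "cycle_edges u 3 = {{a, b}, {b, c}, {a, c}}"
    by (simp add: cycle_edges_def three u_def insert_commute)
  moreover have "3 \<le> (3::nat) \<and> odd (3::nat)"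
    by simp
  ultimately show ?thesis
    unfolding odd_cycles_eq by blast
qed

lemma sum_triangle:
  assumes "x \<noteq> y" "y \<noteq> z" "x \<noteq> z"
  shows "(\<Sum>e\<in>{{x, y}, {y, z}, {x, z}}. f e) = f {x, y} + f {y, z} + f {x, z}"
  using assms by (simp add: doubleton_eq_iff add.assoc)

lemma odd_cycle_subset_Kn_edges:
  assumes "D \<in> odd_cycles"
  shows "D \<subseteq> Kn_edges"
proof -
  obtain u m where "D = cycle_edges u m" "3 \<le> m" "inj_on u {..<m}"
    using assms unfolding odd_cycles_eq by blast
  then show ?thesis
    by (simp add: cycle_edges_subset_Kn_edges)
qed

lemma inner_chi: "a \<bullet> chi D = (\<Sum>e\<in>D. a $ e)"
  unfolding inner_vec_def chi_def by (simp add: if_distrib[of "(*) _"] sum.If_cases)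

definition edge_space :: "(real ^ ('v::finite set)) set" where
  "edge_space = {y. \<forall>e. e \<notin> (Kn_edges :: 'v set set) \<longrightarrow> y $ e = 0}"

lemma subspace_edge_space: "subspace edge_space"
  unfolding subspace_def edge_space_def by simp

lemma convex_P_odd_up: "convex P_odd_up"
proof -
  have cone: "convex nonneg_edge_cone"
    unfolding nonneg_edge_cone_def convex_def by simp
  have sums: "P_odd_up = (\<Union>x\<in>P_odd. \<Union>y\<in>nonneg_edge_cone. {x + y})"
    unfolding P_odd_up_def by blast
  show ?thesis
    unfolding sums P_odd_def by (intro convex_sums convex_convex_hull cone)
qed

lemma P_odd_up_subset_edge_space: "P_odd_up \<subseteq> edge_space"
proof -
  have "chi D \<in> edge_space" if "D \<in> odd_cycles" for D
    using odd_cycle_subset_Kn_edges[OF that] by (auto simp: edge_space_def chi_def)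
  then have "P_odd \<subseteq> edge_space"
    unfolding P_odd_def
    by (intro hull_minimal) (auto intro: subspace_imp_convex subspace_edge_space)
  moreover have "nonneg_edge_cone \<subseteq> edge_space"
    by (auto simp: nonneg_edge_cone_def edge_space_def)
  ultimately show ?thesis
    unfolding P_odd_up_def using subspace_add[OF subspace_edge_space] by blast
qed

lemma chi_in_P_odd_up: "D \<in> odd_cycles \<Longrightarrow> chi D \<in> P_odd_up"
  unfolding P_odd_up_def P_odd_def
  by (rule CollectI, rule exI[of _ "chi D"], rule exI[of _ 0])
     (auto simp: nonneg_edge_cone_def intro: hull_inc)

lemma P_odd_up_add_edge:
  assumes "x \<in> P_odd_up" "e \<in> Kn_edges"
  shows "x + axis e 1 \<in> P_odd_up"
proof -
  obtain a b where x: "x = a + b" and "a \<in> P_odd" and b: "b \<in> nonneg_edge_cone"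
    using assms(1) unfolding P_odd_up_def by blast
  have "b + axis e 1 \<in> nonneg_edge_cone"
    using b assms(2) by (auto simp: nonneg_edge_cone_def axis_def)
  moreover have "x + axis e 1 = a + (b + axis e 1)"
    by (simp add: x add.assoc)
  ultimately show ?thesis
    using \<open>a \<in> P_odd\<close> unfolding P_odd_up_def by blast
qed

lemma P_odd_up_halfspace:
  assumes nonneg: "\<And>e. e \<in> Kn_edges \<Longrightarrow> 0 \<le> a $ e"
    and cycles: "\<And>D. D \<in> odd_cycles \<Longrightarrow> b \<le> a \<bullet> chi D"
    and "x \<in> P_odd_up"
  shows "b \<le> a \<bullet> x"
proof -
  obtain y z where x: "x = y + z" and "y \<in> P_odd" and z: "z \<in> nonneg_edge_cone"
    using assms(3) unfolding P_odd_up_def by blast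
  have "P_odd \<subseteq> {y. b \<le> a \<bullet> y}"
    unfolding P_odd_def using cycles by (intro hull_minimal) (auto simp: convex_halfspace_ge)
  with \<open>y \<in> P_odd\<close> have "b \<le> a \<bullet> y"
    by blast
  moreover have "0 \<le> a $ e * z $ e" for e
    using z nonneg by (cases "e \<in> Kn_edges") (auto simp: nonneg_edge_cone_def)
  then have "0 \<le> a \<bullet> z"
    unfolding inner_vec_def by (simp add: sum_nonneg)
  ultimately show ?thesis
    by (simp add: x inner_add_right)
qed

section \<open>The C-induced constraint\<close>

lemma odd_ell:
  assumes "a \<in> {1..2*k+1}" "b \<in> {1..2*k+1}" "a \<noteq> b"
  shows "odd (ell k a b)"
  using assms by (auto simp: ell_def Let_def)

definition signed_ell :: "nat \<Rightarrow> nat \<Rightarrow> nat \<Rightarrow> int" where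
  "signed_ell k a b = (if odd (int b - int a) then int b - int a
     else if a < b then int b - int a - int (2*k+1) else int b - int a + int (2*k+1))"

lemma signed_ell_cong: "int (2*k+1) dvd signed_ell k a b - (int b - int a)"
proof -
  have "signed_ell k a b - (int b - int a) \<in> {0, - int (2*k+1), int (2*k+1)}"
    by (simp add: signed_ell_def)
  then show ?thesis
    by (metis dvd_0_right dvd_minus_iff dvd_refl empty_iff insertE)
qed

lemma abs_signed_ell:
  assumes "a \<in> {1..2*k+1}" "b \<in> {1..2*k+1}" "a \<noteq> b"
  shows "\<bar>signed_ell k a b\<bar> = int (ell k a b)"
  using assms by (cases "a < b") (auto simp: signed_ell_def ell_def Let_def of_nat_diff even_diff)

lemma odd_signed_ell:
  assumes "a \<in> {1..2*k+1}" "b \<in> {1..2*k+1}" "a \<noteq> b"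
  shows "odd (signed_ell k a b)"
  using abs_signed_ell[OF assms] odd_ell[OF assms] by (metis dvd_abs_iff even_of_nat)

lemma ell_commute: "ell k a b = ell k b a"
  by (simp add: ell_def Let_def)

lemma ell_odd_diff: "a < b \<Longrightarrow> odd (b - a) \<Longrightarrow> ell k a b = b - a"
  by (simp add: ell_def Let_def)

lemma ell_even_diff: "a < b \<Longrightarrow> even (b - a) \<Longrightarrow> ell k a b = 2*k+1 - (b - a)"
  by (simp add: ell_def Let_def)

locale C_induced =
  fixes k :: nat and v :: "nat \<Rightarrow> 'v::finite" and s t :: 'v
  assumes card_UNIV: "CARD('v) = 2 * k + 3" and k_pos: "1 \<le> k"
    and inj_v: "inj_on v {1..2*k+1}"
    and s_notin: "s \<notin> v ` {1..2*k+1}" and t_notin: "t \<notin> v ` {1..2*k+1}" and s_neq_t: "s \<noteq> t"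
begin

lemma v_neq [simp]:
  assumes "i \<in> {1..2*k+1}"
  shows "v i \<noteq> s" "v i \<noteq> t" "s \<noteq> v i" "t \<noteq> v i"
  using assms s_notin t_notin by force+

lemma v_eq_iff [simp]:
  "i \<in> {1..2*k+1} \<Longrightarrow> j \<in> {1..2*k+1} \<Longrightarrow> v i = v j \<longleftrightarrow> i = j"
  using inj_v by (simp add: inj_on_eq_iff)

lemma UNIV_eq: "UNIV = {s, t} \<union> v ` {1..2*k+1}"
proof -
  have "card ({s, t} \<union> v ` {1..2*k+1}) = 2 * k + 3"
    using s_notin t_notin s_neq_t card_image[OF inj_v] by simp
  then show ?thesis
    using card_UNIV card_subset_eq[of UNIV "{s, t} \<union> v ` {1..2*k+1}"] by simp
qed

lemma vertex_cases:
  obtains "x = s" | "x = t" | i where "i \<in> {1..2*k+1}" "x = v i"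
  using UNIV_eq by blast

definition weight :: "'v set \<Rightarrow> real" where
  "weight e = C_lhs k v s t (axis e 1)"

definition weight_vec :: "real ^ ('v set)" where
  "weight_vec = (\<chi> e. weight e)"

lemma linear_C_lhs: "linear (C_lhs k v s t)"
  by (rule linearI)
     (simp_all add: C_lhs_def sum.distrib sum_distrib_left algebra_simps case_prod_beta)

lemma C_lhs_eq_inner: "C_lhs k v s t x = weight_vec \<bullet> x"
proof -
  have "C_lhs k v s t x = C_lhs k v s t (\<Sum>e\<in>UNIV. x $ e *\<^sub>R axis e 1)"
    using basis_expansion[of x] by (simp add: scalar_mult_eq_scaleR)
  also have "\<dots> = (\<Sum>e\<in>UNIV. x $ e * weight e)"
    by (simp add: linear_sum[OF linear_C_lhs] linear_scale[OF linear_C_lhs] weight_def)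
  finally show ?thesis
    by (simp add: inner_vec_def weight_vec_def mult.commute)
qed

lemma C_lhs_chi: "C_lhs k v s t (chi D) = (\<Sum>e\<in>D. weight e)"
  by (simp add: C_lhs_eq_inner inner_chi weight_vec_def)

lemma weight_eq:
  "weight e = (if e = {s, t} then 1 else 0)
     + real k * (if e \<in> Kn_edges \<and> card (e \<inter> v ` {1..2*k+1}) = 1 then 1 else 0)
     + (\<Sum>(i, j)\<in>{(i, j). 1 \<le> i \<and> i < j \<and> j \<le> 2*k+1}. if e = {v i, v j} then real (ell k i j) else 0)"
  unfolding weight_def C_lhs_def
  by (simp add: axis_def if_distrib[of "(*) _"] eq_commute[of e] case_prod_beta cong: if_cong)

lemma weight_st: "weight {s, t} = 1"
proof -
  have "{s, t} \<noteq> {v i, v j}" if "1 \<le> i" "j \<le> 2*k+1" "i < j" for i j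
    using that by (auto simp: doubleton_eq_iff)
  then show ?thesis
    using s_notin t_notin by (auto simp: weight_eq intro!: sum.neutral)
qed

lemma weight_spoke:
  assumes "x \<in> {s, t}" "y \<notin> {s, t}"
  shows "weight {x, y} = real k"
proof -
  obtain a where a: "a \<in> {1..2*k+1}" "y = v a"
    using assms(2) by (cases y rule: vertex_cases) auto
  have "{x, v a} \<noteq> {v i, v j}" if "1 \<le> i" "j \<le> 2*k+1" "i < j" for i j
    using that a assms(1) by (auto simp: doubleton_eq_iff)
  moreover have "{x, v a} \<inter> v ` {1..2*k+1} = {v a}"
    using a assms(1) s_notin t_notin by auto
  moreover have "{x, v a} \<in> Kn_edges" "{x, v a} \<noteq> {s, t}"
    using a assms(1) s_neq_t by (auto simp: Kn_edges_def doubleton_eq_iff)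
  ultimately show ?thesis
    using a by (auto simp: weight_eq intro!: sum.neutral)
qed

lemma weight_chord:
  assumes "a \<in> {1..2*k+1}" "b \<in> {1..2*k+1}" "a \<noteq> b"
  shows "weight {v a, v b} = real (ell k a b)"
proof -
  let ?P = "{(i, j). 1 \<le> i \<and> i < j \<and> j \<le> 2*k+1}"
  have fin: "finite ?P"
    by (rule finite_subset[of _ "{..2*k+1} \<times> {..2*k+1}"]) auto
  have "(\<Sum>(i, j)\<in>?P. if {v a, v b} = {v i, v j} then real (ell k i j) else 0)
      = (\<Sum>p\<in>?P. if {v a, v b} = {v (fst p), v (snd p)} then real (ell k (fst p) (snd p)) else 0)"
    by (simp add: case_prod_beta)
  also have "\<dots> = (\<Sum>p\<in>{p \<in> ?P. {v a, v b} = {v (fst p), v (snd p)}}. real (ell k (fst p) (snd p)))"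
    by (rule sum.inter_filter[OF fin, symmetric])
  also have "{p \<in> ?P. {v a, v b} = {v (fst p), v (snd p)}} = {(min a b, max a b)}"
    using assms by (auto simp: doubleton_eq_iff min_def max_def)
  also have "(\<Sum>p\<in>{(min a b, max a b)}. real (ell k (fst p) (snd p))) = real (ell k a b)"
    by (simp add: ell_def Let_def min_def max_def)
  finally show ?thesis
    using assms by (simp add: weight_eq doubleton_eq_iff)
qed

lemma weight_nonedge:
  assumes "e \<notin> Kn_edges"
  shows "weight e = 0"
proof -
  have "e \<noteq> {s, t}"
    using assms s_neq_t by (auto simp: Kn_edges_def)
  moreover have "e \<noteq> {v i, v j}" if "1 \<le> i" "i < j" "j \<le> 2*k+1" for i j
    using assms that by (auto simp: Kn_edges_def)
  ultimately show ?thesis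
    using assms by (auto simp: weight_eq intro!: sum.neutral)
qed

lemma weight_nonneg: "0 \<le> weight e"
  unfolding weight_eq by (intro add_nonneg_nonneg sum_nonneg) (auto split: prod.splits)

lemma weight_ge_1:
  assumes "e \<in> Kn_edges"
  shows "1 \<le> weight e"
proof -
  obtain x y where e: "e = {x, y}" "x \<noteq> y"
    using assms by (auto simp: Kn_edges_def card_2_iff)
  show ?thesis
  proof (cases x rule: vertex_cases; cases y rule: vertex_cases)
    fix i j
    assume "i \<in> {1..2*k+1}" "x = v i" "j \<in> {1..2*k+1}" "y = v j"
    then show ?thesis
      using e weight_chord[of i j] by (auto simp: ell_def Let_def)
  qed (use e k_pos weight_st weight_spoke in \<open>auto simp: insert_commute\<close>)
qed

definition cycle_succ :: "nat \<Rightarrow> nat" where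
  "cycle_succ i = (if i = 2*k+1 then 1 else Suc i)"

lemma cycle_succ_in: "i \<in> {1..2*k+1} \<Longrightarrow> cycle_succ i \<in> {1..2*k+1}"
  by (auto simp: cycle_succ_def)

lemma cycle_succ_neq: "cycle_succ i \<noteq> i"
  using k_pos by (auto simp: cycle_succ_def)

lemma weight_cycle_edge:
  assumes "i \<in> {1..2*k+1}"
  shows "weight {v i, v (cycle_succ i)} = 1"
proof -
  have "ell k i (cycle_succ i) = 1"
    using assms by (auto simp: cycle_succ_def ell_def Let_def)
  then show ?thesis
    using weight_chord[OF assms cycle_succ_in[OF assms] cycle_succ_neq[symmetric]] by simp
qed

lemma inj_on_arc:
  assumes "1 \<le> a" "a < b" "b \<le> 2*k+1"
  shows "inj_on (\<lambda>i. v (a + i)) {..<Suc (b - a)}"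
  using assms by (auto simp: inj_on_def)

lemma arc_in_odd_cycles:
  assumes "1 \<le> a" "a < b" "b \<le> 2*k+1" "even (b - a)"
  shows "cycle_edges (\<lambda>i. v (a + i)) (Suc (b - a)) \<in> odd_cycles"
proof -
  have "2 \<le> b - a"
    using assms(2,4) by presburger
  with inj_on_arc[OF assms(1-3)] show ?thesis
    using assms(4) unfolding odd_cycles_eq by force
qed

lemma sum_arc:
  assumes "1 \<le> a" "a < b" "b \<le> 2*k+1" "even (b - a)"
  shows "(\<Sum>e\<in>cycle_edges (\<lambda>i. v (a + i)) (Suc (b - a)). f e)
    = f {v a, v b} + (\<Sum>i<b - a. f {v (a + i), v (Suc (a + i))})"
proof -
  have "2 \<le> b - a"
    using assms(2,4) by presburger
  with inj_on_arc[OF assms(1-3)] have "(\<Sum>e\<in>cycle_edges (\<lambda>i. v (a + i)) (Suc (b - a)). f e)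
      = (\<Sum>i<Suc (b - a). f {v (a + i), v (a + Suc i mod Suc (b - a))})"
    by (simp add: sum_cycle_edges)
  also have "\<dots> = (\<Sum>i<b - a. f {v (a + i), v (Suc (a + i))}) + f {v b, v a}"
    using assms(2) by simp
  finally show ?thesis
    by (simp add: insert_commute add.commute)
qed

lemma weight_path_edge:
  assumes "1 \<le> j" "j < 2*k+1"
  shows "weight {v j, v (Suc j)} = 1"
  using weight_cycle_edge[of j] assms by (simp add: cycle_succ_def)

section \<open>Validity\<close>

lemma closed_walk_weight_ge_inside:
  assumes "odd m"
    and inside: "\<And>i. i < m \<Longrightarrow> u i \<in> v ` {1..2*k+1}"
    and no_loop: "\<And>i. i < m \<Longrightarrow> u i \<noteq> u (Suc i mod m)"
  shows "real (2*k+1) \<le> (\<Sum>i<m. weight {u i, u (Suc i mod m)})"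
proof -
  define p where "p i = inv_into {1..2*k+1} v (u i)" for i
  have p: "p i \<in> {1..2*k+1}" "v (p i) = u i" if "i < m" for i
    unfolding p_def using inside[OF that] by (rule inv_into_into, rule f_inv_into_f)
  have step: "p i \<in> {1..2*k+1}" "p (Suc i mod m) \<in> {1..2*k+1}" "p i \<noteq> p (Suc i mod m)"
    and walk: "{u i, u (Suc i mod m)} = {v (p i), v (p (Suc i mod m))}" if "i < m" for i
  proof -
    have "Suc i mod m < m"
      using that by simp
    then show "p i \<in> {1..2*k+1}" "p (Suc i mod m) \<in> {1..2*k+1}" "p i \<noteq> p (Suc i mod m)"
      "{u i, u (Suc i mod m)} = {v (p i), v (p (Suc i mod m))}"
      using p[OF that] p[of "Suc i mod m"] no_loop[OF that] by metis+
  qed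
  define g where "g i = signed_ell k (p i) (p (Suc i mod m))" for i
  have "\<bar>int (2*k+1)\<bar> \<le> (\<Sum>i<m. \<bar>g i\<bar>)"
  proof (rule abs_modulus_le_odd_closed_walk[OF \<open>odd m\<close>, where p = "\<lambda>i. int (p i)"])
    show "odd (g i)" if "i < m" for i
      unfolding g_def using step[OF that] by (rule odd_signed_ell)
    show "int (2*k+1) dvd g i - (int (p (Suc i mod m)) - int (p i))" for i
      unfolding g_def by (rule signed_ell_cong)
  qed
  then have "real (2*k+1) \<le> real_of_int (\<Sum>i<m. \<bar>g i\<bar>)"
    by (metis abs_of_nat of_int_le_iff of_int_of_nat_eq)
  also have "\<dots> = (\<Sum>i<m. real (ell k (p i) (p (Suc i mod m))))"
    unfolding of_int_sum
  proof (rule sum.cong)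
    fix i
    assume "i \<in> {..<m}"
    then have "\<bar>g i\<bar> = int (ell k (p i) (p (Suc i mod m)))"
      using abs_signed_ell[OF step] by (simp add: g_def)
    then show "real_of_int \<bar>g i\<bar> = real (ell k (p i) (p (Suc i mod m)))"
      by simp
  qed simp
  also have "\<dots> = (\<Sum>i<m. weight {u i, u (Suc i mod m)})"
    using weight_chord[OF step] walk by simp
  finally show ?thesis .
qed

(* The cycle leaves and re-enters {s, t} along two spokes of weight k and has a third edge. *)
lemma closed_walk_weight_ge_through_st:
  assumes "3 \<le> m" "inj_on u {..<m}" "i < m" "u i \<in> {s, t}"
  shows "real (2*k+1) \<le> (\<Sum>l<m. weight {u l, u (Suc l mod m)})"
proof -
  have "\<not> u ` {..<m} \<subseteq> {s, t}"
  proof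
    assume "u ` {..<m} \<subseteq> {s, t}"
    then have "card (u ` {..<m}) \<le> card {s, t}"
      by (rule card_mono[rotated]) simp
    then show False
      using card_image[OF assms(2)] assms(1) s_neq_t by simp
  qed
  then obtain j where "j < m" "u j \<notin> {s, t}"
    by blast
  obtain i0 where i0: "i0 < m" "u i0 \<in> {s, t}" "u (Suc i0 mod m) \<notin> {s, t}"
    using cyclic_transition[of i m "\<lambda>l. u l \<in> {s, t}" j] assms \<open>j < m\<close> \<open>u j \<notin> {s, t}\<close> by blast
  obtain j0 where j0: "j0 < m" "u j0 \<notin> {s, t}" "u (Suc j0 mod m) \<in> {s, t}"
    using cyclic_transition[of j m "\<lambda>l. u l \<notin> {s, t}" i] assms \<open>j < m\<close> \<open>u j \<notin> {s, t}\<close> by blast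
  have "i0 \<noteq> j0"
    using i0 j0 by blast
  have "\<exists>l\<in>{0, 1, 2}. l \<noteq> i0 \<and> l \<noteq> j0"
    by auto
  then obtain l where "l \<in> {0, 1, 2}" "l \<noteq> i0" "l \<noteq> j0"
    by blast
  with assms(1) have l: "l < m" "l \<noteq> i0" "l \<noteq> j0"
    by auto
  have "weight {u i0, u (Suc i0 mod m)} = real k"
    using i0 by (intro weight_spoke) auto
  moreover have "weight {u j0, u (Suc j0 mod m)} = real k"
    using j0 weight_spoke[of "u (Suc j0 mod m)" "u j0"] by (simp add: insert_commute)
  moreover have "1 \<le> weight {u l, u (Suc l mod m)}"
    using cycle_step_neq[of m u l] assms l by (intro weight_ge_1) (simp add: Kn_edges_def)
  moreover have "(\<Sum>l\<in>{i0, j0, l}. weight {u l, u (Suc l mod m)}) \<le> (\<Sum>l<m. weight {u l, u (Suc l mod m)})"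
    using i0(1) j0(1) l(1) by (intro sum_mono2) (auto simp: weight_nonneg)
  ultimately show ?thesis
    using \<open>i0 \<noteq> j0\<close> l by simp
qed

lemma odd_cycle_weight_ge:
  assumes "D \<in> odd_cycles"
  shows "real (2*k+1) \<le> (\<Sum>e\<in>D. weight e)"
proof -
  obtain u m where D: "D = cycle_edges u m" and m: "3 \<le> m" "odd m" and u: "inj_on u {..<m}"
    using assms unfolding odd_cycles_eq by blast
  have "real (2*k+1) \<le> (\<Sum>i<m. weight {u i, u (Suc i mod m)})"
  proof (cases "\<exists>i<m. u i \<in> {s, t}")
    case True
    then show ?thesis
      using closed_walk_weight_ge_through_st m u by blast
  next
    case False
    have "u i \<in> v ` {1..2*k+1}" if "i < m" for i
      using False that by (cases "u i" rule: vertex_cases) auto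
    moreover have "u i \<noteq> u (Suc i mod m)" if "i < m" for i
      using m u that by (intro cycle_step_neq) auto
    ultimately show ?thesis
      using m by (intro closed_walk_weight_ge_inside)
  qed
  then show ?thesis
    by (simp add: D sum_cycle_edges m u)
qed

lemma C_lhs_ge:
  assumes "x \<in> P_odd_up"
  shows "real (2*k+1) \<le> C_lhs k v s t x"
  unfolding C_lhs_eq_inner
proof (rule P_odd_up_halfspace[OF _ _ assms])
  show "0 \<le> weight_vec $ e" for e
    by (simp add: weight_vec_def weight_nonneg)
  show "real (2*k+1) \<le> weight_vec \<bullet> chi D" if "D \<in> odd_cycles" for D
    using odd_cycle_weight_ge[OF that] by (simp add: weight_vec_def inner_chi)
qed

end

section \<open>Tight odd cycles\<close>

(* An edge function with the same sum on every tight odd cycle is a multiple of the weights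
   (edge_value); this is the hypothesis rigid of facet_of_halfspace_rigid. *)
locale C_induced_tight = C_induced k v s t for k and v :: "nat \<Rightarrow> 'v::finite" and s t +
  fixes \<alpha> :: "'v set \<Rightarrow> real" and \<beta> :: real
  assumes sum_tight: "\<And>D. D \<in> odd_cycles \<Longrightarrow> C_lhs k v s t (chi D) = real (2*k+1) \<Longrightarrow> (\<Sum>e\<in>D. \<alpha> e) = \<beta>"
begin

lemma tight_triangle:
  assumes "x \<noteq> y" "y \<noteq> z" "x \<noteq> z"
    and "weight {x, y} + weight {y, z} + weight {x, z} = real (2*k+1)"
  shows "\<alpha> {x, y} + \<alpha> {y, z} + \<alpha> {x, z} = \<beta>"
  using sum_tight[OF triangle_in_odd_cycles[OF assms(1-3)]] assms by (simp add: C_lhs_chi sum_triangle)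

lemma tight_arc:
  assumes "1 \<le> a" "a < b" "b \<le> 2*k+1" "even (b - a)"
  shows "\<alpha> {v a, v b} + (\<Sum>i<b - a. \<alpha> {v (a + i), v (Suc (a + i))}) = \<beta>"
proof -
  have "(\<Sum>i<b - a. weight {v (a + i), v (Suc (a + i))}) = real (b - a)"
    using assms by (simp add: weight_path_edge)
  moreover have "weight {v a, v b} = real (2*k+1 - (b - a))"
    using assms by (simp add: weight_chord ell_even_diff)
  ultimately have "C_lhs k v s t (chi (cycle_edges (\<lambda>i. v (a + i)) (Suc (b - a)))) = real (2*k+1)"
    using assms by (simp add: C_lhs_chi sum_arc of_nat_diff)
  from sum_tight[OF arc_in_odd_cycles[OF assms] this] show ?thesis
    using assms by (simp add: sum_arc)
qed

lemma tight_spoke_triangle: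
  assumes "x \<in> {s, t}" "j \<in> {1..2*k+1}"
  shows "\<alpha> {x, v j} + \<alpha> {v j, v (cycle_succ j)} + \<alpha> {x, v (cycle_succ j)} = \<beta>"
proof (rule tight_triangle)
  show "weight {x, v j} + weight {v j, v (cycle_succ j)} + weight {x, v (cycle_succ j)} = real (2*k+1)"
    using assms cycle_succ_in[OF assms(2)] by (simp add: weight_spoke weight_cycle_edge)
qed (use assms cycle_succ_in[OF assms(2)] cycle_succ_neq[of j, symmetric] in auto)

lemma spokes_agree:
  assumes "i \<in> {1..2*k+1}"
  shows "\<alpha> {s, v i} = \<alpha> {t, v i}"
proof -
  define f where "f j = \<alpha> {s, v j} - \<alpha> {t, v j}" for j
  have step: "f j + f (cycle_succ j) = 0" if "j \<in> {1..2*k+1}" for j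
    using tight_spoke_triangle[of s j] tight_spoke_triangle[of t j] that by (simp add: f_def)
  have "f i = 0"
  proof (rule alternating_vanishes_on_odd_cycle[of "2*k+1"])
    show "f j + f (Suc j) = 0" if "1 \<le> j" "j < 2*k+1" for j
      using step[of j] that by (simp add: cycle_succ_def)
    show "f (2*k+1) + f 1 = 0"
      using step[of "2*k+1"] by (simp add: cycle_succ_def)
  qed (use assms in auto)
  then show ?thesis
    by (simp add: f_def)
qed

lemma spoke_twice:
  assumes "i \<in> {1..2*k+1}"
  shows "2 * \<alpha> {s, v i} = \<beta> - \<alpha> {s, t}"
proof -
  have "\<alpha> {s, t} + \<alpha> {t, v i} + \<alpha> {s, v i} = \<beta>"
    using assms s_neq_t by (intro tight_triangle) (auto simp: weight_st weight_spoke)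
  then show ?thesis
    using spokes_agree[OF assms] by simp
qed

lemma cycle_edge_value:
  assumes "i \<in> {1..2*k+1}"
  shows "\<alpha> {v i, v (cycle_succ i)} = \<alpha> {s, t}"
  using tight_spoke_triangle[of s i] spoke_twice[OF assms] spoke_twice[OF cycle_succ_in[OF assms]] assms
  by simp

lemma beta_eq: "\<beta> = real (2*k+1) * \<alpha> {s, t}"
proof -
  have "\<alpha> {v 1, v (2*k+1)} = \<alpha> {s, t}"
    using cycle_edge_value[of "2*k+1"] by (simp add: cycle_succ_def insert_commute)
  moreover have "\<alpha> {v (1 + i), v (Suc (1 + i))} = \<alpha> {s, t}" if "i < 2*k" for i
    using cycle_edge_value[of "1 + i"] that by (simp add: cycle_succ_def)
  ultimately show ?thesis
    using tight_arc[of 1 "2*k+1"] k_pos by (simp add: algebra_simps)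
qed

lemma spoke_value:
  assumes "x \<in> {s, t}" "i \<in> {1..2*k+1}"
  shows "\<alpha> {x, v i} = real k * \<alpha> {s, t}"
  using spoke_twice[OF assms(2)] spokes_agree[OF assms(2)] beta_eq assms(1) by (auto simp: algebra_simps)

lemma even_chord_value:
  assumes "1 \<le> a" "a < b" "b \<le> 2*k+1" "even (b - a)"
  shows "\<alpha> {v a, v b} = real (ell k a b) * \<alpha> {s, t}"
proof -
  have "\<alpha> {v (a + i), v (Suc (a + i))} = \<alpha> {s, t}" if "i < b - a" for i
  proof -
    have "a + i < 2*k+1"
      using that assms by arith
    then show ?thesis
      using cycle_edge_value[of "a + i"] assms by (simp add: cycle_succ_def)
  qed
  then show ?thesis
    using tight_arc[OF assms] beta_eq assms by (simp add: ell_even_diff of_nat_diff algebra_simps)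
qed

(* An odd chord lies in a tight triangle together with an edge of C and an even chord. *)
lemma odd_chord_value:
  assumes "1 \<le> a" "a < b" "b \<le> 2*k+1" "odd (b - a)"
  shows "\<alpha> {v a, v b} = real (ell k a b) * \<alpha> {s, t}"
proof (cases "b < 2*k+1")
  case True
  have "even (Suc b - a)"
    using assms(2,4) by (simp add: Suc_diff_le)
  then have "\<alpha> {v a, v b} + \<alpha> {v b, v (Suc b)} + \<alpha> {v a, v (Suc b)} = \<beta>"
    using assms True
    by (intro tight_triangle) (auto simp: weight_chord weight_path_edge ell_odd_diff ell_even_diff)
  moreover have "\<alpha> {v b, v (Suc b)} = \<alpha> {s, t}"
    using cycle_edge_value[of b] assms True by (simp add: cycle_succ_def)
  moreover have "\<alpha> {v a, v (Suc b)} = real (2*k+1 - (Suc b - a)) * \<alpha> {s, t}"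
    using even_chord_value[of a "Suc b"] \<open>even (Suc b - a)\<close> assms True by (simp add: ell_even_diff)
  ultimately show ?thesis
    using beta_eq assms True by (simp add: ell_odd_diff of_nat_diff algebra_simps)
next
  case False
  then have b: "b = 2*k+1"
    using assms(3) by simp
  then have "even a" "2 \<le> a"
    using assms by (auto elim: oddE)
  have idx: "a - 1 \<in> {1..2*k+1}" "a \<in> {1..2*k+1}" "b \<in> {1..2*k+1}" "Suc (a - 1) = a"
    using \<open>2 \<le> a\<close> assms by auto
  have "weight {v (a - 1), v a} = 1"
    using weight_path_edge[of "a - 1"] idx assms by simp
  moreover have "weight {v a, v b} = real (b - a)"
    using weight_chord[of a b] idx assms by (simp add: ell_odd_diff)
  moreover have "weight {v (a - 1), v b} = real (a - 1)"
    using weight_chord[of "a - 1" b] idx assms \<open>even a\<close> b by (simp add: ell_even_diff)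
  ultimately have "\<alpha> {v (a - 1), v a} + \<alpha> {v a, v b} + \<alpha> {v (a - 1), v b} = \<beta>"
    using idx assms \<open>2 \<le> a\<close> b by (intro tight_triangle) (auto simp: of_nat_diff)
  moreover have "\<alpha> {v (a - 1), v a} = \<alpha> {s, t}"
  proof -
    have "cycle_succ (a - 1) = a"
      using \<open>2 \<le> a\<close> assms by (simp add: cycle_succ_def)
    then show ?thesis
      using cycle_edge_value[OF idx(1)] by simp
  qed
  moreover have "\<alpha> {v (a - 1), v b} = real (a - 1) * \<alpha> {s, t}"
    using even_chord_value[of "a - 1" b] \<open>2 \<le> a\<close> assms b by (simp add: ell_even_diff)
  ultimately show ?thesis
    using beta_eq assms b \<open>2 \<le> a\<close> by (simp add: ell_odd_diff of_nat_diff algebra_simps)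
qed

lemma chord_value:
  assumes "a \<in> {1..2*k+1}" "b \<in> {1..2*k+1}" "a \<noteq> b"
  shows "\<alpha> {v a, v b} = real (ell k a b) * \<alpha> {s, t}"
proof -
  have lt: "\<alpha> {v a, v b} = real (ell k a b) * \<alpha> {s, t}"
    if "a < b" "a \<in> {1..2*k+1}" "b \<in> {1..2*k+1}" for a b
    using that even_chord_value odd_chord_value by (cases "even (b - a)") auto
  show ?thesis
  proof (cases "a < b")
    case False
    then have "b < a"
      using assms(3) by simp
    then show ?thesis
      using lt[of b a] assms by (simp add: insert_commute ell_commute)
  qed (use lt assms in auto)
qed

lemma edge_value:
  assumes "e \<in> Kn_edges"
  shows "\<alpha> e = \<alpha> {s, t} * weight e"
proof -
  obtain x y where e: "e = {x, y}" "x \<noteq> y"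
    using assms by (auto simp: Kn_edges_def card_2_iff)
  show ?thesis
  proof (cases x rule: vertex_cases; cases y rule: vertex_cases)
    fix i j
    assume "i \<in> {1..2*k+1}" "x = v i" "j \<in> {1..2*k+1}" "y = v j"
    then show ?thesis
      using e chord_value[of i j] weight_chord[of i j] by auto
  qed (use e weight_st weight_spoke spoke_value in \<open>auto simp: insert_commute\<close>)
qed

end

context C_induced
begin

lemma tight_functional_rigid:
  assumes "c \<in> edge_space"
    and tight: "\<And>D. D \<in> odd_cycles \<Longrightarrow> C_lhs k v s t (chi D) = real (2*k+1) \<Longrightarrow> c \<bullet> chi D = \<beta>"
  shows "c = c $ {s, t} *\<^sub>R weight_vec"
proof -
  interpret C_induced_tight k v s t "\<lambda>e. c $ e" \<beta>
    by unfold_locales (use tight in \<open>simp add: inner_chi\<close>)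
  show ?thesis
    unfolding vec_eq_iff
  proof
    fix e
    show "c $ e = (c $ {s, t} *\<^sub>R weight_vec) $ e"
      using edge_value[of e] assms(1) weight_nonedge[of e]
      by (cases "e \<in> Kn_edges") (auto simp: edge_space_def weight_vec_def)
  qed
qed

theorem C_induced_facet:
  "{x \<in> P_odd_up. C_lhs k v s t x = real (2*k+1)} facet_of P_odd_up"
proof -
  define T where "T = chi ` {D \<in> odd_cycles. C_lhs k v s t (chi D) = real (2*k+1)}"
  define D0 where "D0 = {{s, t}, {t, v 1}, {s, v 1}}"
  have v1: "1 \<in> {1..2*k+1}"
    by simp
  have "D0 \<in> odd_cycles"
    unfolding D0_def using s_neq_t v1 by (intro triangle_in_odd_cycles) auto
  moreover have "C_lhs k v s t (chi D0) = real (2*k+1)"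
    unfolding D0_def C_lhs_chi using s_neq_t v1 by (simp add: sum_triangle weight_st weight_spoke)
  ultimately have "chi D0 \<in> T"
    by (simp add: T_def)
  have st_edge: "{s, t} \<in> Kn_edges"
    using s_neq_t by (simp add: Kn_edges_def)
  have "{x \<in> P_odd_up. weight_vec \<bullet> x = real (2*k+1)} facet_of P_odd_up"
  proof (rule facet_of_halfspace_rigid[OF convex_P_odd_up subspace_edge_space P_odd_up_subset_edge_space])
    show "weight_vec \<in> edge_space"
      by (simp add: edge_space_def weight_vec_def weight_nonedge)
    show "real (2*k+1) \<le> weight_vec \<bullet> x" if "x \<in> P_odd_up" for x
      using C_lhs_ge[OF that] by (simp add: C_lhs_eq_inner)
    show "T \<subseteq> P_odd_up"
      by (auto simp: T_def chi_in_P_odd_up)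
    show "weight_vec \<bullet> x = real (2*k+1)" if "x \<in> T" for x
      using that by (auto simp: T_def C_lhs_eq_inner)
    show "chi D0 + axis {s, t} 1 \<in> P_odd_up"
      using chi_in_P_odd_up[OF \<open>D0 \<in> odd_cycles\<close>] st_edge by (rule P_odd_up_add_edge)
    show "weight_vec \<bullet> (chi D0 + axis {s, t} 1) \<noteq> real (2*k+1)"
      using \<open>C_lhs k v s t (chi D0) = real (2*k+1)\<close>
      by (simp add: C_lhs_eq_inner inner_add_right inner_axis weight_vec_def weight_st)
    show "\<exists>r. c = r *\<^sub>R weight_vec" if "c \<in> edge_space" "\<And>x. x \<in> T \<Longrightarrow> c \<bullet> x = \<beta>" for c \<beta>
      using tight_functional_rigid[OF that(1)] that(2) by (auto simp: T_def)
  qed (fact \<open>chi D0 \<in> T\<close>)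
  then show ?thesis
    by (simp add: C_lhs_eq_inner)
qed

end

theorem lemma6:
  fixes v :: "nat \<Rightarrow> 'v::finite" and s t :: 'v and k :: nat
  assumes "odd CARD('v)" and "CARD('v) \<ge> 5"
    and "k = (CARD('v) - 3) div 2"
    and "inj_on v {1..2*k+1}"
    and "s \<notin> v ` {1..2*k+1}" and "t \<notin> v ` {1..2*k+1}" and "s \<noteq> t"
  shows "(\<forall>x\<in>(P_odd_up :: (real ^ ('v set)) set). C_lhs k v s t x \<ge> real (2*k+1))
    \<and> {x \<in> (P_odd_up :: (real ^ ('v set)) set). C_lhs k v s t x = real (2*k+1)} facet_of P_odd_up"
proof -
  have "CARD('v) = 2 * k + 3" and "1 \<le> k"
    using assms(1-3) by presburger+
  then interpret C_induced k v s t
    using assms(4-7) by unfold_locales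
  show ?thesis
    using C_lhs_ge C_induced_facet by blast
qed

end
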